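(* Let $B$ be a finite set, let $\sigma,\mu\in\mathrm{Sym}(B)$ and let $B'\subseteq B$. Then \[\sigma_{B'}\,\mu_{B'}=(\sigma\,\mu_{B'})_{B'}\qquad\text{and}\qquad \sigma_{|B'}\,\mu_{|B'}=(\sigma\,\mu_{B'})_{|B'}.\]
   Context: Permutations are composed as functions: $\sigma\mu=\sigma\circ\mu$. For $\mu\in\mathrm{Sym}(B)$ and $B'\subseteq B$, the restriction $\mu_{|B'}\in\mathrm{Sym}(B')$ is defined by $\mu_{|B'}(b)=\mu^k(b)$ for $b\in B'$, where $k$ is the least positive integer with $\mu^k(b)\in B'$. The cutting-out $\mu_{B'}\in\mathrm{Sym}(B)$ is the permutation equal to $\mu_{|B'}$ on $B'$ and to the identity on $B\setminus B'$. *)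

theory Defs
  imports "HOL-Combinatorics.Permutations"
begin

text \<open>Elements of Sym(B') are represented, as usual in
HOL-Combinatorics ('permutes'), by functions that are the identity outside B'.\<close>
definition perm_restrict :: "('a \<Rightarrow> 'a) \<Rightarrow> 'a set \<Rightarrow> 'a \<Rightarrow> 'a" where
  "perm_restrict \<mu> B' b =
     (if b \<in> B' then (\<mu> ^^ (LEAST k. 0 < k \<and> (\<mu> ^^ k) b \<in> B')) b else b)"

definition perm_cutout :: "('a \<Rightarrow> 'a) \<Rightarrow> 'a set \<Rightarrow> 'a \<Rightarrow> 'a" where
  "perm_cutout \<mu> B' = (\<lambda>b. if b \<in> B' then perm_restrict \<mu> B' b else b)"

end

theory Submission
  imports Defs "HOL-Combinatorics.Cycles"
begin

text \<open>Write \<open>\<nu> = \<mu>\<^bsub>B'\<^esub>\<close> and, for \<open>b \<in> B'\<close>, \<open>c = \<nu> b \<in> B'\<close>. Since \<open>\<nu>\<close> is the identity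
outside \<open>B'\<close>, the powers of \<open>\<sigma> \<nu>\<close> starting at \<open>b\<close> follow the \<open>\<sigma>\<close>-orbit of \<open>c\<close> until that orbit
re-enters \<open>B'\<close>. So the first return of \<open>\<sigma> \<nu>\<close> from \<open>b\<close> to \<open>B'\<close> lands where the first return
of \<open>\<sigma>\<close> from \<open>c\<close> does, i.e. \<open>(\<sigma> \<nu>)\<^bsub>|B'\<^esub> b = \<sigma>\<^bsub>|B'\<^esub> c\<close>. Both identities are this one, because
in the encoding used here restriction and cutting-out are the same function.\<close>

definition first_return :: "('a \<Rightarrow> 'a) \<Rightarrow> 'a set \<Rightarrow> 'a \<Rightarrow> nat" where
  "first_return f A x = (LEAST k. 0 < k \<and> (f ^^ k) x \<in> A)"

lemma perm_cutout_eq_perm_restrict: "perm_cutout f A = perm_restrict f A"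
  unfolding perm_cutout_def perm_restrict_def by auto

lemma perm_restrict_outside: "x \<notin> A \<Longrightarrow> perm_restrict f A x = x"
  unfolding perm_restrict_def by simp

lemma perm_restrict_eq_funpow_first_return:
  "x \<in> A \<Longrightarrow> perm_restrict f A x = (f ^^ first_return f A x) x"
  unfolding perm_restrict_def first_return_def by simp

lemma permutation_funpow_returns:
  assumes "permutation f" "x \<in> A"
  shows "\<exists>k. 0 < k \<and> (f ^^ k) x \<in> A"
proof -
  obtain n where "f ^^ n = id" "0 < n"
    using permutation_is_nilpotent[OF assms(1)] by blast
  then show ?thesis using assms(2) by auto
qed

lemma first_return_pos_and_mem:
  assumes "permutation f" "x \<in> A"
  shows "0 < first_return f A x \<and> (f ^^ first_return f A x) x \<in> A"
  unfolding first_return_def by (rule LeastI_ex[OF permutation_funpow_returns[OF assms]])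

lemma not_mem_before_first_return:
  "0 < k \<Longrightarrow> k < first_return f A x \<Longrightarrow> (f ^^ k) x \<notin> A"
  unfolding first_return_def using not_less_Least by blast

lemma first_return_eqI:
  assumes "0 < k" "(f ^^ k) x \<in> A" "\<And>j. 0 < j \<Longrightarrow> j < k \<Longrightarrow> (f ^^ j) x \<notin> A"
  shows "first_return f A x = k"
  unfolding first_return_def
  by (rule Least_equality) (use assms not_less in blast)+

lemma perm_restrict_mem:
  "permutation f \<Longrightarrow> x \<in> A \<Longrightarrow> perm_restrict f A x \<in> A"
  using first_return_pos_and_mem perm_restrict_eq_funpow_first_return by metis

lemma funpow_comp_id_outside:
  assumes "\<And>y. y \<notin> A \<Longrightarrow> \<nu> y = y"
    and "\<And>j. 0 < j \<Longrightarrow> j < k \<Longrightarrow> (\<sigma> ^^ j) (\<nu> x) \<notin> A"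
    and "0 < k"
  shows "((\<sigma> \<circ> \<nu>) ^^ k) x = (\<sigma> ^^ k) (\<nu> x)"
  using assms(2,3)
proof (induction k)
  case 0
  then show ?case by simp
next
  case (Suc k)
  show ?case
  proof (cases "k = 0")
    case True
    then show ?thesis by simp
  next
    case False
    have "((\<sigma> \<circ> \<nu>) ^^ k) x = (\<sigma> ^^ k) (\<nu> x)"
      using False Suc.prems by (intro Suc.IH) auto
    moreover have "(\<sigma> ^^ k) (\<nu> x) \<notin> A"
      using False Suc.prems(1) by simp
    ultimately show ?thesis using assms(1) by (metis comp_apply funpow.simps(2))
  qed
qed

lemma perm_restrict_comp_apply:
  assumes \<sigma>: "permutation \<sigma>" and \<mu>: "permutation \<mu>" and x: "x \<in> A"
  shows "perm_restrict \<sigma> A (perm_restrict \<mu> A x) = perm_restrict (\<sigma> \<circ> perm_restrict \<mu> A) A x"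
proof -
  define \<nu> where "\<nu> = perm_restrict \<mu> A"
  define m where "m = first_return \<sigma> A (\<nu> x)"
  have "\<nu> x \<in> A" unfolding \<nu>_def using perm_restrict_mem[OF \<mu> x] .
  then have m: "0 < m" "(\<sigma> ^^ m) (\<nu> x) \<in> A"
    unfolding m_def using first_return_pos_and_mem[OF \<sigma>] by auto
  have before: "(\<sigma> ^^ j) (\<nu> x) \<notin> A" if "0 < j" "j < m" for j
    using that unfolding m_def by (rule not_mem_before_first_return)
  have orbit: "((\<sigma> \<circ> \<nu>) ^^ k) x = (\<sigma> ^^ k) (\<nu> x)" if k: "0 < k" "k \<le> m" for k
  proof (rule funpow_comp_id_outside[OF _ _ \<open>0 < k\<close>])
    show "\<nu> y = y" if "y \<notin> A" for y
      unfolding \<nu>_def using that by (rule perm_restrict_outside)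
    show "(\<sigma> ^^ j) (\<nu> x) \<notin> A" if "0 < j" "j < k" for j
      using before that k by simp
  qed
  have "first_return (\<sigma> \<circ> \<nu>) A x = m"
  proof (rule first_return_eqI)
    show "((\<sigma> \<circ> \<nu>) ^^ m) x \<in> A"
      unfolding orbit[OF \<open>0 < m\<close> order.refl] by (rule m(2))
    show "((\<sigma> \<circ> \<nu>) ^^ j) x \<notin> A" if "0 < j" "j < m" for j
      unfolding orbit[OF that(1) less_imp_le[OF that(2)]] by (rule before[OF that])
  qed (rule \<open>0 < m\<close>)
  then have "perm_restrict (\<sigma> \<circ> \<nu>) A x = ((\<sigma> \<circ> \<nu>) ^^ m) x"
    using perm_restrict_eq_funpow_first_return[OF x] by simp
  also have "\<dots> = (\<sigma> ^^ m) (\<nu> x)"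
    by (rule orbit[OF \<open>0 < m\<close> order.refl])
  also have "\<dots> = perm_restrict \<sigma> A (\<nu> x)"
    unfolding m_def by (rule perm_restrict_eq_funpow_first_return[OF \<open>\<nu> x \<in> A\<close>, symmetric])
  finally show ?thesis
    unfolding \<nu>_def by (rule sym)
qed

lemma perm_restrict_comp:
  assumes "permutation \<sigma>" "permutation \<mu>"
  shows "perm_restrict \<sigma> A \<circ> perm_restrict \<mu> A = perm_restrict (\<sigma> \<circ> perm_restrict \<mu> A) A"
proof
  fix x
  show "(perm_restrict \<sigma> A \<circ> perm_restrict \<mu> A) x = perm_restrict (\<sigma> \<circ> perm_restrict \<mu> A) A x"
    by (cases "x \<in> A") (simp_all add: perm_restrict_comp_apply[OF assms] perm_restrict_outside)
qed

theorem lemma1: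
  fixes B B' :: "'a set" and \<sigma> \<mu> :: "'a \<Rightarrow> 'a"
  assumes "finite B" and "\<sigma> permutes B" and "\<mu> permutes B" and "B' \<subseteq> B"
  shows "perm_cutout \<sigma> B' \<circ> perm_cutout \<mu> B' = perm_cutout (\<sigma> \<circ> perm_cutout \<mu> B') B'
    \<and> perm_restrict \<sigma> B' \<circ> perm_restrict \<mu> B' = perm_restrict (\<sigma> \<circ> perm_cutout \<mu> B') B'"
proof -
  have "permutation \<sigma>" "permutation \<mu>"
    using assms(1-3) permutation_permutes by blast+
  then show ?thesis
    using perm_restrict_comp by (simp add: perm_cutout_eq_perm_restrict)
qed

end
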